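(* Let $m,n\ge0$ be integers and let $\lambda$ be an almost $(m|n)$-cross bipartition. (i) $|\lambda|=(m+1)(n+1)$. In particular, all almost $(m|n)$-cross bipartitions have the same size. (ii) For any integers $m',n'$ with $0\le m'\le m$ and $0\le n'\le n$, there exists an almost $(m'|n')$-cross bipartition $\mu$ with $\mu\subset\lambda$.
   Context: A partition is a weakly decreasing sequence $\alpha=(\alpha_1,\alpha_2,\dots)$ of nonnegative integers, almost all zero, with size $|\alpha|=\sum_i\alpha_i$. A bipartition is a pair $\lambda=(\lambda^\bullet,\lambda^\circ)$ of partitions, with size $|\lambda|=|\lambda^\bullet|+|\lambda^\circ|$. Containment is componentwise: $\mu\subset\lambda$ iff $\mu^\bullet_i\le\lambda^\bullet_i$ and $\mu^\circ_i\le\lambda^\circ_i$ for all $i$. A bipartition $\lambda$ is $(m|n)$-cross if there exists $k$ with $0\le k\le m$ such that $\lambda^\bullet_{k+1}+\lambda^\circ_{m-k+1}\le n$. It is almost $(m|n)$-cross if it is not $(m|n)$-cross but every bipartition strictly contained in it is $(m|n)$-cross. *)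

theory Defs
  imports Main
begin

text \<open>A partition is represented as a function nat => nat, indexed from 0:
  the paper's alpha_i (i >= 1) is our a (i - 1).\<close>

definition is_partition :: "(nat \<Rightarrow> nat) \<Rightarrow> bool" where
  "is_partition a \<longleftrightarrow> (\<forall>i. a (Suc i) \<le> a i) \<and> finite {i. a i \<noteq> 0}"

definition psize :: "(nat \<Rightarrow> nat) \<Rightarrow> nat" where
  "psize a = (\<Sum>i\<in>{i. a i \<noteq> 0}. a i)"

type_synonym bipartition = "(nat \<Rightarrow> nat) \<times> (nat \<Rightarrow> nat)"

definition is_bipartition :: "bipartition \<Rightarrow> bool" where
  "is_bipartition l \<longleftrightarrow> is_partition (fst l) \<and> is_partition (snd l)"

definition bsize :: "bipartition \<Rightarrow> nat" where
  "bsize l = psize (fst l) + psize (snd l)"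

definition bcontained :: "bipartition \<Rightarrow> bipartition \<Rightarrow> bool" where
  "bcontained mu l \<longleftrightarrow> (\<forall>i. fst mu i \<le> fst l i \<and> snd mu i \<le> snd l i)"

text \<open>(m|n)-cross: exists k <= m with lambda-bullet_(k+1) + lambda-circ_(m-k+1) <= n
  (0-indexed: fst l k + snd l (m - k)).\<close>
definition is_cross :: "nat \<Rightarrow> nat \<Rightarrow> bipartition \<Rightarrow> bool" where
  "is_cross m n l \<longleftrightarrow> (\<exists>k\<le>m. fst l k + snd l (m - k) \<le> n)"

definition almost_cross :: "nat \<Rightarrow> nat \<Rightarrow> bipartition \<Rightarrow> bool" where
  "almost_cross m n l \<longleftrightarrow> is_bipartition l \<and> \<not> is_cross m n l \<and>
     (\<forall>mu. is_bipartition mu \<and> bcontained mu l \<and> mu \<noteq> l \<longrightarrow> is_cross m n mu)"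

end

theory Submission
  imports Defs
begin

text \<open>An almost \<open>(m|n)\<close>-cross bipartition \<open>(a, b)\<close> is exactly one with no boxes beyond
  row \<open>m\<close> and \<open>a k + b (m - k) = n + 1\<close> for all \<open>k \<le> m\<close>. Removing a corner box of \<open>a\<close> in
  row \<open>p\<close> changes only the \<open>p\<close>-th cross sum, and only by one; since the smaller bipartition must
  be cross, the corner row satisfies \<open>p \<le> m\<close> and its sum is at most \<open>n + 1\<close>. Summing the
  \<open>m + 1\<close> equations gives the size. For \<open>m' \<le> m\<close>, \<open>n' \<le> n\<close>, cutting the rows
  \<open>0..m'\<close> of \<open>a\<close> at length \<open>n' + 1\<close> and completing them by the \<open>(m'|n')\<close>-equations yields an
  almost \<open>(m'|n')\<close>-cross bipartition, which lies inside \<open>(a, b)\<close> because \<open>a\<close> decreases.\<close>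

lemma is_partition_antimono: "is_partition a \<Longrightarrow> i \<le> j \<Longrightarrow> a j \<le> a i"
  unfolding is_partition_def by (auto intro: lift_Suc_antimono_le[of a])

lemma is_partitionI_bounded:
  assumes "\<And>i j. i \<le> j \<Longrightarrow> a j \<le> a i" and "\<And>i. m < i \<Longrightarrow> a i = 0"
  shows "is_partition a"
  unfolding is_partition_def
proof
  have "{i. a i \<noteq> 0} \<subseteq> {..m}"
    using assms(2) by (auto simp flip: not_less)
  then show "finite {i. a i \<noteq> 0}" by (rule finite_subset) simp
qed (simp add: assms(1))

lemma is_partition_remove_corner:
  assumes "is_partition a" and "a (Suc p) < a p"
  shows "is_partition (a(p := a p - 1))"
proof -
  have mono: "\<forall>i. a (Suc i) \<le> a i" and fin: "finite {i. a i \<noteq> 0}"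
    using assms(1) unfolding is_partition_def by auto
  have "(a(p := a p - 1)) (Suc i) \<le> (a(p := a p - 1)) i" for i
  proof (cases "i = p")
    case True
    then show ?thesis using assms(2) by simp
  next
    case False
    then show ?thesis using mono[rule_format, of i] by (cases "Suc i = p") auto
  qed
  moreover have "finite {i. (a(p := a p - 1)) i \<noteq> 0}"
    by (rule finite_subset[OF _ fin]) auto
  ultimately show ?thesis unfolding is_partition_def by blast
qed

lemma is_partition_corner:
  assumes "is_partition a" and "0 < a i"
  obtains p where "i \<le> p" and "a p = a i" and "a (Suc p) < a p"
proof -
  define S where "S = {j. a j = a i}"
  have "finite S"
    using assms unfolding is_partition_def S_def by (auto elim: finite_subset[rotated])
  moreover have "i \<in> S" by (simp add: S_def)
  ultimately have "i \<le> Max S" "Max S \<in> S" "Suc (Max S) \<notin> S"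
    using Max_ge Max_in Suc_n_not_le_n by blast+
  moreover have "a (Suc (Max S)) \<le> a (Max S)"
    using assms(1) unfolding is_partition_def by auto
  ultimately show thesis by (intro that[of "Max S"]) (auto simp: S_def)
qed

lemma is_cross_swap: "is_cross m n (b, a) \<longleftrightarrow> is_cross m n (a, b)"
proof -
  have "is_cross m n (a, b)" if swapped: "is_cross m n (b, a)" for a b :: "nat \<Rightarrow> nat"
  proof -
    obtain k where "k \<le> m" "b k + a (m - k) \<le> n" using swapped unfolding is_cross_def by auto
    then show ?thesis unfolding is_cross_def by (intro exI[of _ "m - k"]) (auto simp: add.commute)
  qed
  then show ?thesis by blast
qed

lemma almost_cross_swap:
  assumes "almost_cross m n (a, b)"
  shows "almost_cross m n (b, a)"
  unfolding almost_cross_def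
proof (intro conjI allI impI)
  show "is_bipartition (b, a)" and "\<not> is_cross m n (b, a)"
    using assms is_cross_swap unfolding almost_cross_def is_bipartition_def by auto
  fix mu assume mu: "is_bipartition mu \<and> bcontained mu (b, a) \<and> mu \<noteq> (b, a)"
  then have "is_cross m n (snd mu, fst mu)"
    using assms unfolding almost_cross_def is_bipartition_def bcontained_def
    by (metis fst_conv prod.collapse snd_conv)
  then show "is_cross m n mu" by (metis is_cross_swap prod.collapse)
qed

lemma almost_cross_remove_corner:
  assumes A: "almost_cross m n (a, b)" and corner: "a (Suc p) < a p"
  obtains k where "k \<le> m" and "(a(p := a p - 1)) k + b (m - k) \<le> n"
proof -
  have "is_bipartition (a(p := a p - 1), b)"
    using A is_partition_remove_corner corner unfolding almost_cross_def is_bipartition_def by auto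
  moreover have "(a(p := a p - 1), b) \<noteq> (a, b)"
    using corner by (auto dest: fun_cong[of _ _ p])
  ultimately have "is_cross m n (a(p := a p - 1), b)"
    using A unfolding almost_cross_def bcontained_def by auto
  then show thesis using that unfolding is_cross_def by auto
qed

lemma almost_cross_vanishes_fst:
  assumes A: "almost_cross m n (a, b)" and "m < i"
  shows "a i = 0"
proof (rule ccontr)
  assume "a i \<noteq> 0"
  moreover have "is_partition a" using A unfolding almost_cross_def is_bipartition_def by auto
  ultimately obtain p where "i \<le> p" "a (Suc p) < a p" by (metis is_partition_corner not_gr0)
  then obtain k where "k \<le> m" "(a(p := a p - 1)) k + b (m - k) \<le> n"
    using almost_cross_remove_corner[OF A] by blast
  moreover have "k \<noteq> p" using \<open>k \<le> m\<close> \<open>m < i\<close> \<open>i \<le> p\<close> by auto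
  ultimately have "is_cross m n (a, b)" unfolding is_cross_def by auto
  then show False using A unfolding almost_cross_def by blast
qed

lemma almost_cross_vanishes_snd:
  "almost_cross m n (a, b) \<Longrightarrow> m < i \<Longrightarrow> b i = 0"
  using almost_cross_vanishes_fst almost_cross_swap by blast

lemma almost_cross_row_sum_le:
  assumes A: "almost_cross m n (a, b)" and "k \<le> m" and "0 < a k"
  shows "a k + b (m - k) \<le> n + 1"
proof -
  have pa: "is_partition a" and pb: "is_partition b"
    using A unfolding almost_cross_def is_bipartition_def by auto
  obtain p where "k \<le> p" "a p = a k" "a (Suc p) < a p"
    using is_partition_corner[OF pa \<open>0 < a k\<close>] by blast
  have "p \<le> m" using almost_cross_vanishes_fst[OF A, of p] \<open>a p = a k\<close> \<open>0 < a k\<close> by force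
  obtain k' where "k' \<le> m" "(a(p := a p - 1)) k' + b (m - k') \<le> n"
    using almost_cross_remove_corner[OF A \<open>a (Suc p) < a p\<close>] by blast
  moreover have "k' = p"
    using A calculation unfolding almost_cross_def is_cross_def
    by (metis fun_upd_apply fst_conv snd_conv)
  moreover have "b (m - k) \<le> b (m - p)"
    using is_partition_antimono[OF pb] \<open>k \<le> p\<close> \<open>p \<le> m\<close> by auto
  ultimately show ?thesis using \<open>a p = a k\<close> by auto
qed

lemma almost_cross_row_sum:
  assumes A: "almost_cross m n (a, b)" and "k \<le> m"
  shows "a k + b (m - k) = n + 1"
proof -
  have "\<not> a k + b (m - k) \<le> n"
    using A \<open>k \<le> m\<close> unfolding almost_cross_def is_cross_def by auto
  moreover have "a k + b (m - k) \<le> n + 1"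
  proof (cases "0 < a k")
    case True
    then show ?thesis using almost_cross_row_sum_le[OF A \<open>k \<le> m\<close>] by blast
  next
    case False
    then show ?thesis
      using almost_cross_row_sum_le[OF almost_cross_swap[OF A], of "m - k"] \<open>k \<le> m\<close>
      by (cases "b (m - k) = 0") (auto simp: add.commute)
  qed
  ultimately show ?thesis by simp
qed

lemma almost_cross_iff:
  "almost_cross m n (a, b) \<longleftrightarrow>
     is_bipartition (a, b) \<and> (\<forall>i>m. a i = 0 \<and> b i = 0) \<and> (\<forall>k\<le>m. a k + b (m - k) = n + 1)"
  (is "_ \<longleftrightarrow> ?bip \<and> ?vanish \<and> ?sums")
proof
  assume "almost_cross m n (a, b)"
  then show "?bip \<and> ?vanish \<and> ?sums"
    using almost_cross_vanishes_fst almost_cross_vanishes_snd almost_cross_row_sum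
    unfolding almost_cross_def by blast
next
  assume "?bip \<and> ?vanish \<and> ?sums"
  then have bip: ?bip and vanish: "\<And>i. m < i \<Longrightarrow> a i = 0 \<and> b i = 0"
    and sums: "\<And>k. k \<le> m \<Longrightarrow> a k + b (m - k) = n + 1"
    by auto
  have "is_cross m n mu" if sub: "bcontained mu (a, b)" and ne: "mu \<noteq> (a, b)" for mu
  proof (cases mu)
    case (Pair e f)
    have le: "e i \<le> a i" "f i \<le> b i" for i
      using sub Pair unfolding bcontained_def by auto
    have "e \<noteq> a \<or> f \<noteq> b" using ne Pair by auto
    then obtain i where "e i \<noteq> a i \<or> f i \<noteq> b i" by (auto simp: fun_eq_iff)
    then have "e i < a i \<or> f i < b i" using le[of i] by auto
    then show ?thesis
    proof
      assume lt: "e i < a i"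
      then have "i \<le> m" using vanish[of i] by (cases "m < i") auto
      then have "e i + f (m - i) \<le> n" using sums[of i] le[of "m - i"] lt by linarith
      then show ?thesis unfolding Pair is_cross_def using \<open>i \<le> m\<close> by auto
    next
      assume lt: "f i < b i"
      then have "i \<le> m" using vanish[of i] by (cases "m < i") auto
      then have "e (m - i) + f i \<le> n" using sums[of "m - i"] le[of "m - i"] lt by simp
      then show ?thesis unfolding Pair is_cross_def using \<open>i \<le> m\<close>
        by (intro exI[of _ "m - i"]) simp
    qed
  qed
  moreover have "\<not> is_cross m n (a, b)" using sums unfolding is_cross_def by auto
  ultimately show "almost_cross m n (a, b)" using bip unfolding almost_cross_def by blast
qed

lemma psize_eq_sum_atMost:
  assumes "\<And>i. m < i \<Longrightarrow> a i = 0"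
  shows "psize a = (\<Sum>i\<le>m. a i)"
  unfolding psize_def
proof (rule sum.mono_neutral_left)
  show "{i. a i \<noteq> 0} \<subseteq> {..m}" using assms by (auto simp flip: not_less)
qed auto

lemma bsize_almost_cross:
  assumes "almost_cross m n (a, b)"
  shows "bsize (a, b) = (m + 1) * (n + 1)"
proof -
  have vanish: "\<forall>i>m. a i = 0 \<and> b i = 0" and sums: "\<forall>k\<le>m. a k + b (m - k) = n + 1"
    using assms unfolding almost_cross_iff by auto
  have "(\<Sum>k\<le>m. b (m - k)) = (\<Sum>k\<le>m. b k)"
    using sum.atLeastAtMost_rev[of b 0 m] by (simp add: atLeast0AtMost)
  then have "bsize (a, b) = (\<Sum>k\<le>m. a k) + (\<Sum>k\<le>m. b (m - k))"
    unfolding bsize_def using vanish psize_eq_sum_atMost[of m a] psize_eq_sum_atMost[of m b]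
    by simp
  also have "\<dots> = (\<Sum>k\<le>m. n + 1)"
    unfolding sum.distrib[symmetric] using sums by (intro sum.cong) auto
  finally show ?thesis by simp
qed

lemma almost_cross_sub:
  assumes A: "almost_cross m n (a, b)" and "m' \<le> m" and "n' \<le> n"
  shows "\<exists>mu. almost_cross m' n' mu \<and> bcontained mu (a, b)"
proof -
  have pa: "is_partition a" using A unfolding almost_cross_def is_bipartition_def by auto
  define c where "c k = (if k \<le> m' then min (a k) (n' + 1) else 0)" for k
  define d where "d j = (if j \<le> m' then n' + 1 - c (m' - j) else 0)" for j
  have c_antimono: "c j \<le> c i" if "i \<le> j" for i j
    using is_partition_antimono[OF pa that] that by (auto simp: c_def)
  have "is_partition c"
    using c_antimono by (rule is_partitionI_bounded[of _ m']) (auto simp: c_def)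
  moreover have "d j \<le> d i" if "i \<le> j" for i j
  proof -
    have "c (m' - i) \<le> c (m' - j)" using that by (intro c_antimono) simp
    then show ?thesis using that by (simp add: d_def diff_le_mono2)
  qed
  then have "is_partition d"
    by (rule is_partitionI_bounded[of _ m']) (auto simp: d_def)
  ultimately have "almost_cross m' n' (c, d)"
    unfolding almost_cross_iff is_bipartition_def by (auto simp: c_def d_def)
  moreover have "b j + a (m - j) = n + 1" if "j \<le> m'" for j
    using almost_cross_row_sum[OF A, of "m - j"] that \<open>m' \<le> m\<close> by simp
  then have "d j \<le> b j" for j
    using is_partition_antimono[OF pa, of "m' - j" "m - j"] \<open>m' \<le> m\<close> \<open>n' \<le> n\<close>
    by (fastforce simp: d_def c_def min_def)
  then have "bcontained (c, d) (a, b)" unfolding bcontained_def by (simp add: c_def)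
  ultimately show ?thesis by blast
qed

theorem proposition2p6:
  fixes m n :: nat and l :: bipartition
  assumes "almost_cross m n l"
  shows "bsize l = (m + 1) * (n + 1)
    \<and> (\<forall>l'. almost_cross m n l' \<longrightarrow> bsize l' = bsize l)
    \<and> (\<forall>m' n'. m' \<le> m \<and> n' \<le> n \<longrightarrow>
         (\<exists>mu. almost_cross m' n' mu \<and> bcontained mu l))"
proof -
  have size: "bsize l' = (m + 1) * (n + 1)" if "almost_cross m n l'" for l'
    using bsize_almost_cross[of m n "fst l'" "snd l'"] that by simp
  have "\<exists>mu. almost_cross m' n' mu \<and> bcontained mu l" if "m' \<le> m" "n' \<le> n" for m' n'
    using almost_cross_sub[of m n "fst l" "snd l"] assms that by simp
  then show ?thesis using size assms by simp
qed

end
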